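(* Let $n\ge3$ and let $(S^n,g_0)$ be the round unit sphere $S^n\subset\mathbb{R}^{n+1}$, with $x^0,\dots,x^n$ the restrictions of the standard coordinates of $\mathbb{R}^{n+1}$. Then for all $u\in C^\infty(S^n)$, \[ \sum_{i=0}^n x^i\bigl(L_{\sigma_2}(x^iu,u,u) - x^iL_{\sigma_2}(u,u,u)\bigr) = \frac{n-1}{3}\,u\,\sigma_1(u), \] where $\sigma_1(u) := -\frac{n-4}{8}\Delta u^2 - |\nabla u|^2 + \frac n2\bigl(\frac{n-4}{4}\bigr)^2u^2$.
   Context: All geometric quantities are taken with respect to $g_0$: $\nabla$ gradient, $\delta$ divergence, $d$ exterior derivative, $\Delta=\delta d$ the (nonpositive) Laplacian. $L_{\sigma_2}$ is the symmetric trilinear differential operator (the polarization) whose diagonal is \[ L_{\sigma_2}(u,u,u) = \tfrac12\delta\bigl(|\nabla u|^2du\bigr) - \tfrac{n-4}{16}\bigl(u\Delta|\nabla u|^2 - \delta((\Delta u^2)du)\bigr) - \tfrac{n-1}{4}\bigl(\tfrac{n-4}{4}\bigr)^2 u\Delta u^2 + \tfrac{n(n-1)}{8}\bigl(\tfrac{n-4}{4}\bigr)^3u^3, \] i.e. $L_{\sigma_2}(u_1,u_2,u_3)$ is trilinear, symmetric in its three arguments, and agrees with the displayed expression when $u_1=u_2=u_3=u$. *)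

theory Defs
  imports "HOL-Analysis.Analysis"
begin

text \<open>Concrete model of the round unit sphere S^n inside a Euclidean space 'a of
dimension n+1.  A function on S^n is represented by a function on 'a of which only
the values on the unit sphere matter.  Every geometric operator first extends its
argument 0-homogeneously off the sphere and then applies Euclidean calculus; at
points of the sphere this yields exactly the intrinsic operators of g_0.\<close>

definition hext :: "('a::real_normed_vector \<Rightarrow> 'b) \<Rightarrow> 'a \<Rightarrow> 'b" where
  "hext f y = f (scaleR (1 / norm y) y)"

definition dirderiv :: "'a::real_normed_vector \<Rightarrow> ('a \<Rightarrow> 'b::real_normed_vector) \<Rightarrow> 'a \<Rightarrow> 'b" where
  "dirderiv v f x = frechet_derivative f (at x) v"

definition smooth_on :: "'a::euclidean_space set \<Rightarrow> ('a \<Rightarrow> 'b::real_normed_vector) \<Rightarrow> bool" where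
  "smooth_on S f \<longleftrightarrow> (\<forall>bs. set bs \<subseteq> Basis \<longrightarrow> (foldr dirderiv bs f) differentiable_on S)"

definition smooth_sphere_fun :: "('a::euclidean_space \<Rightarrow> real) \<Rightarrow> bool" where
  "smooth_sphere_fun u \<longleftrightarrow> smooth_on (UNIV - {0}) (hext u)"

definition sgrad :: "('a::euclidean_space \<Rightarrow> real) \<Rightarrow> 'a \<Rightarrow> 'a" where
  "sgrad f x = (\<Sum>b\<in>Basis. frechet_derivative (hext f) (at x) b *\<^sub>R b)"

text \<open>Divergence with respect to g_0 of a tangent vector field (1-forms are
identified with vector fields via g_0); delta = div, so Delta = delta d = div grad.\<close>
definition sdiv :: "('a::euclidean_space \<Rightarrow> 'a) \<Rightarrow> 'a \<Rightarrow> real" where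
  "sdiv V x = (\<Sum>b\<in>Basis. frechet_derivative (hext V) (at x) b \<bullet> b)"

definition slap :: "('a::euclidean_space \<Rightarrow> real) \<Rightarrow> 'a \<Rightarrow> real" where
  "slap f = sdiv (sgrad f)"

definition Lsig2_diag :: "real \<Rightarrow> ('a::euclidean_space \<Rightarrow> real) \<Rightarrow> 'a \<Rightarrow> real" where
  "Lsig2_diag n u x =
     1/2 * sdiv (\<lambda>y. (norm (sgrad u y))\<^sup>2 *\<^sub>R sgrad u y) x
   - (n - 4) / 16 * (u x * slap (\<lambda>y. (norm (sgrad u y))\<^sup>2) x
                     - sdiv (\<lambda>y. slap (\<lambda>z. (u z)\<^sup>2) y *\<^sub>R sgrad u y) x)
   - (n - 1) / 4 * ((n - 4) / 4)\<^sup>2 * u x * slap (\<lambda>y. (u y)\<^sup>2) x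
   + n * (n - 1) / 8 * ((n - 4) / 4) ^ 3 * (u x) ^ 3"

definition Lsig2 :: "real \<Rightarrow> ('a::euclidean_space \<Rightarrow> real) \<Rightarrow> ('a \<Rightarrow> real) \<Rightarrow> ('a \<Rightarrow> real) \<Rightarrow> 'a \<Rightarrow> real" where
  "Lsig2 n u1 u2 u3 x =
     (Lsig2_diag n (\<lambda>y. u1 y + u2 y + u3 y) x
      - Lsig2_diag n (\<lambda>y. u1 y + u2 y) x
      - Lsig2_diag n (\<lambda>y. u1 y + u3 y) x
      - Lsig2_diag n (\<lambda>y. u2 y + u3 y) x
      + Lsig2_diag n u1 x + Lsig2_diag n u2 x + Lsig2_diag n u3 x) / 6"

definition sigma1 :: "real \<Rightarrow> ('a::euclidean_space \<Rightarrow> real) \<Rightarrow> 'a \<Rightarrow> real" where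
  "sigma1 n u x = - (n - 4) / 8 * slap (\<lambda>y. (u y)\<^sup>2) x - (norm (sgrad u x))\<^sup>2
                  + n / 2 * ((n - 4) / 4)\<^sup>2 * (u x)\<^sup>2"

end

theory Submission
  imports Defs "HOL-Library.Function_Algebras"
begin

(*
  Let U be the 0-homogeneous extension of u to the punctured space. At a point x of the
  sphere the gradient, divergence and Laplacian of g_0 are Euclidean derivatives of U, corrected
  by Euler's relations DU(x) x = 0 and D^2 U(x)(x, -) = -DU(x). Hence L_sigma2(u,u,u)(x) is a
  cubic form C(J,J,J) in the 3-jet J of U at x, and L_sigma2(v,u,u)(x) is
  (C(a,J,J) + C(J,a,J) + C(J,J,a)) / 3 with a the jet of the extension of v. This is linear in
  v, so the sum over i collapses to v = (x . y) u, whose extension is (x . y/|y|) U. Since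
  x . y/|y| equals 1 to first order at x, the two jets differ only in the second and third order
  terms coming from the Hessian of x . y/|y|, and contracting these with Euler's relations
  gives (n - 1) u sigma1(u).
*)

section \<open>Derivatives on the punctured space\<close>

abbreviation smooth_punctured :: "('a::euclidean_space \<Rightarrow> real) \<Rightarrow> bool" where
  "smooth_punctured F \<equiv> smooth_on (UNIV - {0}) F"

definition D1 :: "('a::euclidean_space \<Rightarrow> real) \<Rightarrow> 'a \<Rightarrow> 'a \<Rightarrow> real" where
  "D1 F y v = frechet_derivative F (at y) v"

definition D2 :: "('a::euclidean_space \<Rightarrow> real) \<Rightarrow> 'a \<Rightarrow> 'a \<Rightarrow> 'a \<Rightarrow> real" where
  "D2 F y v w = D1 (\<lambda>z. D1 F z w) y v"

definition D3 :: "('a::euclidean_space \<Rightarrow> real) \<Rightarrow> 'a \<Rightarrow> 'a \<Rightarrow> 'a \<Rightarrow> 'a \<Rightarrow> real" where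
  "D3 F y s v w = D1 (\<lambda>z. D2 F z v w) y s"

lemma open_punctured: "open (UNIV - {0::'a::real_normed_vector})"
  by (simp add: open_Diff)

lemma D1_eqI: "(F has_derivative F') (at y) \<Longrightarrow> D1 F y v = F' v"
  unfolding D1_def using frechet_derivative_at by metis

lemma has_derivative_punctured_cong:
  assumes "(F has_derivative F') (at y)" "y \<noteq> 0" "\<And>z. z \<noteq> 0 \<Longrightarrow> F z = G z"
  shows "(G has_derivative F') (at y)"
  using assms(1) open_punctured by (rule has_derivative_transform_within_open) (use assms in auto)

lemma frechet_derivative_punctured_cong:
  assumes "y \<noteq> 0" "\<And>z. z \<noteq> 0 \<Longrightarrow> F z = G z"
  shows "frechet_derivative F (at y) = frechet_derivative G (at y)"
proof -
  have "(F has_derivative F') (at y) \<longleftrightarrow> (G has_derivative F') (at y)" for F'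
    using has_derivative_punctured_cong[OF _ assms(1)] assms(2) by metis
  then show ?thesis by (simp add: frechet_derivative_def)
qed

lemma D1_cong: "y \<noteq> 0 \<Longrightarrow> (\<And>z. z \<noteq> 0 \<Longrightarrow> F z = G z) \<Longrightarrow> D1 F y = D1 G y"
  unfolding D1_def[abs_def] by (drule frechet_derivative_punctured_cong) auto

lemma D1_cong_at: "y \<noteq> 0 \<Longrightarrow> (\<And>z. z \<noteq> 0 \<Longrightarrow> F z = G z) \<Longrightarrow> D1 F y v = D1 G y v"
  using D1_cong by metis

lemma D2_cong:
  assumes "y \<noteq> 0" "\<And>z. z \<noteq> 0 \<Longrightarrow> F z = G z"
  shows "D2 F y = D2 G y"
proof -
  have "D1 (\<lambda>z. D1 F z w) y = D1 (\<lambda>z. D1 G z w) y" for w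
    by (rule D1_cong[OF assms(1)]) (simp add: D1_cong[OF _ assms(2)])
  then show ?thesis by (simp add: D2_def fun_eq_iff)
qed

lemma differentiable_on_punctured_cong:
  assumes "F differentiable_on UNIV - {0}" "\<And>z. z \<noteq> 0 \<Longrightarrow> F z = G z"
  shows "G differentiable_on UNIV - {0}"
  using assms has_derivative_punctured_cong[of F _ _ G]
  unfolding differentiable_on_eq_differentiable_at[OF open_punctured] differentiable_def
  by blast

primrec partials_differentiable :: "nat \<Rightarrow> ('a::euclidean_space \<Rightarrow> real) \<Rightarrow> bool" where
  "partials_differentiable 0 F \<longleftrightarrow> F differentiable_on UNIV - {0}"
| "partials_differentiable (Suc k) F \<longleftrightarrow> F differentiable_on UNIV - {0} \<and>
     (\<forall>b\<in>Basis. partials_differentiable k (\<lambda>y. D1 F y b))"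

lemma partials_differentiable_imp_differentiable_on:
  "partials_differentiable k F \<Longrightarrow> F differentiable_on UNIV - {0}"
  by (cases k) auto

lemma partials_differentiable_cong:
  "partials_differentiable k F \<Longrightarrow> (\<And>z. z \<noteq> 0 \<Longrightarrow> F z = G z) \<Longrightarrow> partials_differentiable k G"
proof (induction k arbitrary: F G)
  case 0
  then show ?case using differentiable_on_punctured_cong by auto
next
  case (Suc k)
  have "partials_differentiable k (\<lambda>y. D1 G y b)" if "b \<in> Basis" for b
  proof (rule Suc.IH)
    show "partials_differentiable k (\<lambda>y. D1 F y b)" using Suc.prems(1) that by simp
    show "D1 F z b = D1 G z b" if "z \<noteq> 0" for z
      using D1_cong[OF that Suc.prems(2)] by simp
  qed
  moreover have "G differentiable_on UNIV - {0}"
    using Suc.prems differentiable_on_punctured_cong[of F G] by simp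
  ultimately show ?case by simp
qed

lemma partials_differentiable_Suc_imp:
  "partials_differentiable (Suc k) F \<Longrightarrow> partials_differentiable k F"
  by (induction k arbitrary: F) auto

lemma partials_differentiable_has_derivative:
  "partials_differentiable k F \<Longrightarrow> y \<noteq> 0 \<Longrightarrow> (F has_derivative D1 F y) (at y)"
  using partials_differentiable_imp_differentiable_on[of k F] frechet_derivative_works
  unfolding differentiable_on_eq_differentiable_at[OF open_punctured] D1_def[abs_def] by auto

lemma partials_differentiable_const: "partials_differentiable k (\<lambda>z. c)"
proof (induction k arbitrary: c)
  case (Suc k)
  then show ?case by (simp add: D1_def)
qed simp

lemma partials_differentiable_add:
  "partials_differentiable k F \<Longrightarrow> partials_differentiable k G \<Longrightarrow>
    partials_differentiable k (\<lambda>z. F z + G z)"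
proof (induction k arbitrary: F G)
  case (Suc k)
  have "partials_differentiable k (\<lambda>y. D1 (\<lambda>z. F z + G z) y b)" if "b \<in> Basis" for b
  proof (rule partials_differentiable_cong)
    show "partials_differentiable k (\<lambda>y. D1 F y b + D1 G y b)" using Suc that by simp
    show "D1 F y b + D1 G y b = D1 (\<lambda>z. F z + G z) y b" if "y \<noteq> 0" for y
    proof -
      have "(F has_derivative D1 F y) (at y)" "(G has_derivative D1 G y) (at y)"
        using Suc.prems that partials_differentiable_has_derivative by blast+
      then show ?thesis by (intro D1_eqI[symmetric] derivative_intros)
    qed
  qed
  then show ?case using Suc.prems by simp
qed simp

lemma partials_differentiable_mult:
  "partials_differentiable k F \<Longrightarrow> partials_differentiable k G \<Longrightarrow>
    partials_differentiable k (\<lambda>z. F z * G z)"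
proof (induction k arbitrary: F G)
  case (Suc k)
  have "partials_differentiable k (\<lambda>y. D1 (\<lambda>z. F z * G z) y b)" if "b \<in> Basis" for b
  proof (rule partials_differentiable_cong)
    have "partials_differentiable k F" "partials_differentiable k G"
      using Suc.prems partials_differentiable_Suc_imp by blast+
    then show "partials_differentiable k (\<lambda>y. D1 F y b * G y + F y * D1 G y b)"
      using Suc that by (simp add: partials_differentiable_add)
    show "D1 F y b * G y + F y * D1 G y b = D1 (\<lambda>z. F z * G z) y b" if "y \<noteq> 0" for y
    proof -
      have "(F has_derivative D1 F y) (at y)" "(G has_derivative D1 G y) (at y)"
        using Suc.prems that partials_differentiable_has_derivative by blast+
      then have "((\<lambda>z. F z * G z) has_derivative (\<lambda>h. F y * D1 G y h + D1 F y h * G y)) (at y)"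
        by (rule has_derivative_mult)
      then show ?thesis by (simp add: D1_eqI)
    qed
  qed
  then show ?case using Suc.prems by simp
qed simp

lemma smooth_punctured_imp_differentiable_on:
  "smooth_punctured F \<Longrightarrow> F differentiable_on UNIV - {0}"
  unfolding smooth_on_def by (drule spec[of _ "[]"]) simp

lemma dirderiv_eq_D1: "dirderiv b F = (\<lambda>y. D1 F y b)"
  by (simp add: dirderiv_def D1_def fun_eq_iff)

lemma smooth_punctured_partial:
  assumes "smooth_punctured F" "b \<in> Basis"
  shows "smooth_punctured (\<lambda>y. D1 F y b)"
  unfolding smooth_on_def
proof (intro allI impI)
  fix bs :: "'a list"
  assume "set bs \<subseteq> Basis"
  with assms(2) have "set (bs @ [b]) \<subseteq> Basis" by simp
  with assms(1) have "foldr dirderiv (bs @ [b]) F differentiable_on UNIV - {0}"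
    unfolding smooth_on_def by blast
  then show "foldr dirderiv bs (\<lambda>y. D1 F y b) differentiable_on UNIV - {0}"
    unfolding dirderiv_eq_D1[of b F, symmetric] by simp
qed

lemma smooth_punctured_imp_partials_differentiable:
  "smooth_punctured F \<Longrightarrow> partials_differentiable k F"
proof (induction k arbitrary: F)
  case 0
  then show ?case by (simp add: smooth_punctured_imp_differentiable_on)
next
  case (Suc k)
  then show ?case by (simp add: smooth_punctured_imp_differentiable_on smooth_punctured_partial)
qed

lemma partials_differentiable_foldr:
  assumes "partials_differentiable (length bs + k) F" "set bs \<subseteq> Basis"
  shows "partials_differentiable k (foldr dirderiv bs F)"
  using assms
proof (induction bs arbitrary: k)
  case (Cons b bs)
  have "partials_differentiable (length bs + Suc k) F"
    using Cons.prems(1) by (simp only: length_Cons add_Suc_shift)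
  then have "partials_differentiable (Suc k) (foldr dirderiv bs F)"
    by (rule Cons.IH) (use Cons.prems(2) in simp)
  then have "partials_differentiable k (dirderiv b (foldr dirderiv bs F))"
    using Cons.prems(2) unfolding dirderiv_eq_D1[of b] by simp
  then show ?case by simp
qed simp

lemma smooth_punctured_iff: "smooth_punctured F \<longleftrightarrow> (\<forall>k. partials_differentiable k F)"
  using smooth_punctured_imp_partials_differentiable
    partials_differentiable_foldr[where k=0] partials_differentiable_imp_differentiable_on
  unfolding smooth_on_def by fastforce

lemma smooth_punctured_cong:
  "smooth_punctured F \<Longrightarrow> (\<And>z. z \<noteq> 0 \<Longrightarrow> F z = G z) \<Longrightarrow> smooth_punctured G"
  using partials_differentiable_cong unfolding smooth_punctured_iff by blast

lemma smooth_punctured_const: "smooth_punctured (\<lambda>z. c)"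
  by (simp add: smooth_punctured_iff partials_differentiable_const)

lemma smooth_punctured_add:
  "smooth_punctured F \<Longrightarrow> smooth_punctured G \<Longrightarrow> smooth_punctured (\<lambda>z. F z + G z)"
  by (simp add: smooth_punctured_iff partials_differentiable_add)

lemma smooth_punctured_mult:
  "smooth_punctured F \<Longrightarrow> smooth_punctured G \<Longrightarrow> smooth_punctured (\<lambda>z. F z * G z)"
  by (simp add: smooth_punctured_iff partials_differentiable_mult)

lemma smooth_punctured_cmult: "smooth_punctured F \<Longrightarrow> smooth_punctured (\<lambda>z. c * F z)"
  by (rule smooth_punctured_mult[OF smooth_punctured_const])

lemma smooth_punctured_sum:
  "(\<And>i. i \<in> I \<Longrightarrow> smooth_punctured (F i)) \<Longrightarrow> smooth_punctured (\<lambda>z. \<Sum>i\<in>I. F i z)"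
  by (induction I rule: infinite_finite_induct)
    (simp_all add: smooth_punctured_const smooth_punctured_add)

lemma smooth_punctured_has_derivative:
  "smooth_punctured F \<Longrightarrow> y \<noteq> 0 \<Longrightarrow> (F has_derivative D1 F y) (at y)"
  by (rule partials_differentiable_has_derivative[OF smooth_punctured_imp_partials_differentiable])

lemma linear_D1: "smooth_punctured F \<Longrightarrow> y \<noteq> 0 \<Longrightarrow> linear (D1 F y)"
  using smooth_punctured_has_derivative has_derivative_linear by blast

lemma linear_real_basis_expansion:
  fixes f :: "'a::euclidean_space \<Rightarrow> real"
  assumes "linear f"
  shows "f w = (\<Sum>b\<in>Basis. (w \<bullet> b) * f b)"
proof -
  have "f w = f (\<Sum>b\<in>Basis. (w \<bullet> b) *\<^sub>R b)" by (simp add: euclidean_representation)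
  also have "\<dots> = (\<Sum>b\<in>Basis. (w \<bullet> b) * f b)"
    by (simp add: linear_sum[OF assms] linear_scale[OF assms] o_def)
  finally show ?thesis .
qed

lemma smooth_punctured_D1:
  assumes "smooth_punctured F"
  shows "smooth_punctured (\<lambda>z. D1 F z w)"
proof (rule smooth_punctured_cong)
  show "smooth_punctured (\<lambda>z. \<Sum>b\<in>Basis. (w \<bullet> b) * D1 F z b)"
    by (rule smooth_punctured_sum, rule smooth_punctured_cmult,
        rule smooth_punctured_partial[OF assms])
  show "(\<Sum>b\<in>Basis. (w \<bullet> b) * D1 F z b) = D1 F z w" if "z \<noteq> 0" for z
    by (rule linear_real_basis_expansion[OF linear_D1[OF assms that], symmetric])
qed

lemma smooth_punctured_D2: "smooth_punctured F \<Longrightarrow> smooth_punctured (\<lambda>z. D2 F z v w)"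
  unfolding D2_def by (intro smooth_punctured_D1)

lemma has_derivative_D1:
  "smooth_punctured F \<Longrightarrow> y \<noteq> 0 \<Longrightarrow> ((\<lambda>z. D1 F z w) has_derivative (\<lambda>v. D2 F y v w)) (at y)"
  unfolding D2_def by (rule smooth_punctured_has_derivative[OF smooth_punctured_D1])

lemma linear_D2: "smooth_punctured F \<Longrightarrow> y \<noteq> 0 \<Longrightarrow> linear (\<lambda>v. D2 F y v w)"
  using has_derivative_D1 has_derivative_linear by blast

lemma D1_const [simp]: "D1 (\<lambda>z. c) y v = 0"
  by (simp add: D1_def)

lemma D2_const [simp]: "D2 (\<lambda>z. c) y v w = 0"
  by (simp add: D2_def)

lemma D3_const [simp]: "D3 (\<lambda>z. c) y s v w = 0"
  by (simp add: D3_def)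

lemma D1_inner_left [simp]: "D1 (\<lambda>z. z \<bullet> e) y v = v \<bullet> e"
  by (rule D1_eqI) (intro derivative_intros)

lemma D2_inner_left [simp]: "D2 (\<lambda>z. z \<bullet> e) y v w = 0"
  by (simp add: D2_def)

lemma D3_inner_left [simp]: "D3 (\<lambda>z. z \<bullet> e) y s v w = 0"
  by (simp add: D3_def)

lemma D1_D1: "D1 (\<lambda>z. D1 F z w) y v = D2 F y v w"
  by (simp add: D2_def)

lemma D2_D1: "D2 (\<lambda>z. D1 F z w) y s v = D3 F y s v w"
  by (simp add: D2_def D3_def)

lemma D1_D2: "D1 (\<lambda>z. D2 F z v w) y s = D3 F y s v w"
  by (simp add: D3_def)

lemma D1_add:
  "smooth_punctured F \<Longrightarrow> smooth_punctured G \<Longrightarrow> y \<noteq> 0 \<Longrightarrow>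
    D1 (\<lambda>z. F z + G z) y v = D1 F y v + D1 G y v"
  by (rule D1_eqI) (intro derivative_intros smooth_punctured_has_derivative)

lemma D1_mult:
  "smooth_punctured F \<Longrightarrow> smooth_punctured G \<Longrightarrow> y \<noteq> 0 \<Longrightarrow>
    D1 (\<lambda>z. F z * G z) y v = D1 F y v * G y + F y * D1 G y v"
  by (rule D1_eqI, rule has_derivative_eq_rhs[OF has_derivative_mult
        [OF smooth_punctured_has_derivative smooth_punctured_has_derivative]])
    (simp_all add: fun_eq_iff)

lemma D1_sum:
  "(\<And>i. i \<in> I \<Longrightarrow> smooth_punctured (F i)) \<Longrightarrow> y \<noteq> 0 \<Longrightarrow>
    D1 (\<lambda>z. \<Sum>i\<in>I. F i z) y v = (\<Sum>i\<in>I. D1 (F i) y v)"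
  by (rule D1_eqI) (intro has_derivative_sum smooth_punctured_has_derivative)

lemma D2_add:
  assumes "smooth_punctured F" "smooth_punctured G" "y \<noteq> 0"
  shows "D2 (\<lambda>z. F z + G z) y v w = D2 F y v w + D2 G y v w"
proof -
  have "D2 (\<lambda>z. F z + G z) y v w = D1 (\<lambda>z. D1 F z w + D1 G z w) y v"
    unfolding D2_def using assms by (intro D1_cong_at) (simp_all add: D1_add)
  also have "\<dots> = D2 F y v w + D2 G y v w"
    using assms by (simp add: D1_add smooth_punctured_D1 D2_def)
  finally show ?thesis .
qed

lemma D2_mult:
  assumes "smooth_punctured F" "smooth_punctured G" "y \<noteq> 0"
  shows "D2 (\<lambda>z. F z * G z) y v w =
    D2 F y v w * G y + D1 F y w * D1 G y v + D1 F y v * D1 G y w + F y * D2 G y v w"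
proof -
  have "D2 (\<lambda>z. F z * G z) y v w = D1 (\<lambda>z. D1 F z w * G z + F z * D1 G z w) y v"
    unfolding D2_def using assms by (intro D1_cong_at) (simp_all add: D1_mult)
  also have "\<dots> = D2 F y v w * G y + D1 F y w * D1 G y v + D1 F y v * D1 G y w + F y * D2 G y v w"
    using assms
    by (simp add: D1_add D1_mult smooth_punctured_mult smooth_punctured_D1 D2_def algebra_simps)
  finally show ?thesis .
qed

lemma D2_sum:
  assumes "\<And>i. i \<in> I \<Longrightarrow> smooth_punctured (F i)" "y \<noteq> 0"
  shows "D2 (\<lambda>z. \<Sum>i\<in>I. F i z) y v w = (\<Sum>i\<in>I. D2 (F i) y v w)"
proof -
  have "D2 (\<lambda>z. \<Sum>i\<in>I. F i z) y v w = D1 (\<lambda>z. \<Sum>i\<in>I. D1 (F i) z w) y v"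
    unfolding D2_def using assms by (intro D1_cong_at) (simp_all add: D1_sum)
  also have "\<dots> = (\<Sum>i\<in>I. D2 (F i) y v w)"
    using assms by (simp add: D1_sum smooth_punctured_D1 D2_def)
  finally show ?thesis .
qed

lemma D3_add:
  assumes "smooth_punctured F" "smooth_punctured G" "y \<noteq> 0"
  shows "D3 (\<lambda>z. F z + G z) y s v w = D3 F y s v w + D3 G y s v w"
proof -
  have "D3 (\<lambda>z. F z + G z) y s v w = D1 (\<lambda>z. D2 F z v w + D2 G z v w) y s"
    unfolding D3_def using assms by (intro D1_cong_at) (simp_all add: D2_add)
  also have "\<dots> = D3 F y s v w + D3 G y s v w"
    using assms by (simp add: D1_add smooth_punctured_D2 D3_def)
  finally show ?thesis .
qed

lemma D3_mult:
  assumes "smooth_punctured F" "smooth_punctured G" "y \<noteq> 0"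
  shows "D3 (\<lambda>z. F z * G z) y s v w =
      D3 F y s v w * G y + D2 F y v w * D1 G y s + D2 F y s w * D1 G y v + D1 F y w * D2 G y s v
    + D2 F y s v * D1 G y w + D1 F y v * D2 G y s w + D1 F y s * D2 G y v w + F y * D3 G y s v w"
proof -
  have "D3 (\<lambda>z. F z * G z) y s v w =
      D1 (\<lambda>z. D2 F z v w * G z + D1 F z w * D1 G z v + D1 F z v * D1 G z w + F z * D2 G z v w) y s"
    unfolding D3_def using assms by (intro D1_cong_at) (simp_all add: D2_mult)
  also have "\<dots> = D3 F y s v w * G y + D2 F y v w * D1 G y s + D2 F y s w * D1 G y v
      + D1 F y w * D2 G y s v + D2 F y s v * D1 G y w + D1 F y v * D2 G y s w
      + D1 F y s * D2 G y v w + F y * D3 G y s v w"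
    using assms
    by (simp add: D1_add D1_mult smooth_punctured_add smooth_punctured_mult smooth_punctured_D1
        smooth_punctured_D2 D2_def[symmetric] D3_def algebra_simps)
  finally show ?thesis .
qed

lemma smooth_punctured_inner_left: "smooth_punctured (\<lambda>z. z \<bullet> e)"
proof -
  have "partials_differentiable k (\<lambda>z. z \<bullet> e)" for k
    by (cases k) (simp_all add: bounded_linear_imp_differentiable_on bounded_linear_inner_left
        partials_differentiable_const)
  then show ?thesis by (simp add: smooth_punctured_iff)
qed

lemma D1_inner_self [simp]: "D1 (\<lambda>z. z \<bullet> z) y v = 2 * (y \<bullet> v)"
  by (rule D1_eqI, rule has_derivative_eq_rhs[OF has_derivative_inner[OF has_derivative_ident
        has_derivative_ident]]) (simp add: fun_eq_iff inner_commute)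

lemma D2_inner_self [simp]: "D2 (\<lambda>z. z \<bullet> z) y v w = 2 * (v \<bullet> w)"
  unfolding D2_def D1_inner_self
  by (rule D1_eqI) (auto intro!: derivative_eq_intros simp: inner_commute)

lemma smooth_punctured_inner_self: "smooth_punctured (\<lambda>z::'a::euclidean_space. z \<bullet> z)"
proof (rule smooth_punctured_cong)
  show "smooth_punctured (\<lambda>z::'a. \<Sum>b\<in>Basis. (z \<bullet> b) * (z \<bullet> b))"
    by (intro smooth_punctured_sum smooth_punctured_mult smooth_punctured_inner_left)
qed (rule euclidean_inner[symmetric])

lemma has_derivative_inverse_norm:
  fixes y :: "'a::real_inner"
  assumes "y \<noteq> 0"
  shows "((\<lambda>z. inverse (norm z)) has_derivative (\<lambda>h. - (h \<bullet> y) * inverse (norm y) ^ 3)) (at y)"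
proof -
  have "((\<lambda>z. inverse (norm z)) has_derivative
      (\<lambda>h. - (inverse (norm y) * (h \<bullet> sgn y) * inverse (norm y)))) (at y)"
    using assms by (intro derivative_intros has_derivative_norm) auto
  moreover have "- (inverse (norm y) * (h \<bullet> sgn y) * inverse (norm y))
      = - (h \<bullet> y) * inverse (norm y) ^ 3" for h
    using assms by (simp add: sgn_div_norm power3_eq_cube field_simps)
  ultimately show ?thesis by simp
qed

lemma D1_inverse_norm:
  "y \<noteq> 0 \<Longrightarrow> D1 (\<lambda>z. inverse (norm z)) y v = - (v \<bullet> y) * inverse (norm y) ^ 3"
  using has_derivative_inverse_norm D1_eqI by fastforce

lemma smooth_punctured_inverse_norm:
  "smooth_punctured (\<lambda>z::'a::euclidean_space. inverse (norm z))"
proof -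
  let ?r = "\<lambda>z::'a. inverse (norm z)"
  have diff: "?r differentiable_on UNIV - {0}"
    using has_derivative_inverse_norm
    unfolding differentiable_on_eq_differentiable_at[OF open_punctured] differentiable_def
    by blast
  have "partials_differentiable k ?r" for k
  proof (induction k)
    case 0
    show ?case using diff by simp
  next
    case (Suc k)
    have "partials_differentiable k (\<lambda>y. D1 ?r y b)" for b
    proof (rule partials_differentiable_cong)
      have "partials_differentiable k (\<lambda>y. - 1 * (y \<bullet> b))"
        using partials_differentiable_const smooth_punctured_imp_partials_differentiable[OF
            smooth_punctured_inner_left] by (rule partials_differentiable_mult)
      moreover have "partials_differentiable k (\<lambda>y. ?r y * (?r y * ?r y))"
        using Suc.IH by (intro partials_differentiable_mult)
      ultimately show "partials_differentiable k (\<lambda>y. - 1 * (y \<bullet> b) * (?r y * (?r y * ?r y)))"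
        by (rule partials_differentiable_mult)
      show "- 1 * (y \<bullet> b) * (?r y * (?r y * ?r y)) = D1 ?r y b" if "y \<noteq> 0" for y
        using D1_inverse_norm[OF that] by (simp add: power3_eq_cube inner_commute)
    qed
    then show ?case using diff by simp
  qed
  then show ?thesis by (simp add: smooth_punctured_iff)
qed

lemma D2_inverse_norm:
  assumes "y \<noteq> 0"
  shows "D2 (\<lambda>z. inverse (norm z)) y v w
    = 3 * (w \<bullet> y) * (v \<bullet> y) * inverse (norm y) ^ 5 - (v \<bullet> w) * inverse (norm y) ^ 3"
proof -
  define r where "r z = inverse (norm z)" for z :: 'a
  have r: "(r has_derivative (\<lambda>h. - (h \<bullet> y) * r y ^ 3)) (at y)"
    unfolding r_def[abs_def] by (rule has_derivative_inverse_norm[OF assms])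
  have "D2 r y v w = D1 (\<lambda>z. - (w \<bullet> z) * r z ^ 3) y v"
    unfolding D2_def r_def by (rule D1_cong_at[OF assms]) (simp add: D1_inverse_norm inner_commute)
  also have "\<dots> = 3 * (w \<bullet> y) * (v \<bullet> y) * r y ^ 5 - (v \<bullet> w) * r y ^ 3"
    by (rule D1_eqI, rule has_derivative_eq_rhs, (rule derivative_intros r)+)
      (simp add: fun_eq_iff algebra_simps inner_commute eval_nat_numeral)
  finally show ?thesis unfolding r_def[abs_def] .
qed

lemma D3_inverse_norm_unit:
  assumes "norm x = 1"
  shows "D3 (\<lambda>z. inverse (norm z)) x s v w = 3 * (v \<bullet> s) * (w \<bullet> x) + 3 * (v \<bullet> x) * (w \<bullet> s)
    + 3 * (v \<bullet> w) * (s \<bullet> x) - 15 * (s \<bullet> x) * (v \<bullet> x) * (w \<bullet> x)"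
proof -
  define r where "r z = inverse (norm z)" for z :: 'a
  have x: "x \<noteq> 0" and rx: "r x = 1" using assms by (auto simp: r_def)
  have r: "(r has_derivative (\<lambda>h. - (h \<bullet> x) * r x ^ 3)) (at x)"
    unfolding r_def[abs_def] by (rule has_derivative_inverse_norm[OF x])
  have "D3 r x s v w = D1 (\<lambda>z. 3 * (w \<bullet> z) * (v \<bullet> z) * r z ^ 5 - (v \<bullet> w) * r z ^ 3) x s"
    unfolding D3_def r_def by (rule D1_cong_at[OF x]) (simp add: D2_inverse_norm)
  also have "\<dots> = 3 * (v \<bullet> s) * (w \<bullet> x) + 3 * (v \<bullet> x) * (w \<bullet> s) + 3 * (v \<bullet> w) * (s \<bullet> x)
      - 15 * (s \<bullet> x) * (v \<bullet> x) * (w \<bullet> x)"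
    by (rule D1_eqI, rule has_derivative_eq_rhs, (rule derivative_intros r)+)
      (simp add: fun_eq_iff algebra_simps inner_commute rx)
  finally show ?thesis unfolding r_def[abs_def] .
qed

section \<open>Jets and the cubic form of L_sigma2\<close>

(* Jets are added componentwise, the derivatives pointwise (HOL-Library.Function_Algebras). *)
type_synonym 'a jet = "real \<times> ('a \<Rightarrow> real) \<times> ('a \<Rightarrow> 'a \<Rightarrow> real) \<times> ('a \<Rightarrow> 'a \<Rightarrow> 'a \<Rightarrow> real)"

definition jet :: "('a::euclidean_space \<Rightarrow> real) \<Rightarrow> 'a \<Rightarrow> 'a jet" where
  "jet F y = (F y, D1 F y, D2 F y, D3 F y)"

lemma jet_add:
  "smooth_punctured F \<Longrightarrow> smooth_punctured G \<Longrightarrow> y \<noteq> 0 \<Longrightarrow>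
    jet (\<lambda>z. F z + G z) y = jet F y + jet G y"
  by (simp add: jet_def fun_eq_iff D1_add D2_add D3_add)

lemma jet_sum:
  assumes "\<And>i. i \<in> I \<Longrightarrow> smooth_punctured (F i)" "y \<noteq> 0"
  shows "jet (\<lambda>z. \<Sum>i\<in>I. F i z) y = (\<Sum>i\<in>I. jet (F i) y)"
  using assms(1)
proof (induction I rule: infinite_finite_induct)
  case (insert i I)
  then show ?case by (simp add: jet_add smooth_punctured_sum assms(2))
qed (simp_all add: jet_def zero_prod_def fun_eq_iff)

definition jet_scale :: "real \<Rightarrow> 'a jet \<Rightarrow> 'a jet" where
  "jet_scale c = (\<lambda>(v, p, h, T). (c * v, \<lambda>i. c * p i, \<lambda>i j. c * h i j, \<lambda>i j l. c * T i j l))"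

lemma jet_cmult:
  "smooth_punctured F \<Longrightarrow> y \<noteq> 0 \<Longrightarrow> jet (\<lambda>z. c * F z) y = jet_scale c (jet F y)"
  by (simp add: jet_def jet_scale_def fun_eq_iff D1_mult D2_mult D3_mult smooth_punctured_const)

definition cdot :: "('a::euclidean_space \<Rightarrow> real) \<Rightarrow> ('a \<Rightarrow> real) \<Rightarrow> real" where
  "cdot p q = (\<Sum>c\<in>Basis. p c * q c)"

definition chess :: "('a::euclidean_space \<Rightarrow> real) \<Rightarrow> ('a \<Rightarrow> real) \<Rightarrow> ('a \<Rightarrow> 'a \<Rightarrow> real) \<Rightarrow> real" where
  "chess p q h = (\<Sum>b\<in>Basis. \<Sum>c\<in>Basis. p b * q c * h b c)"

definition ctr :: "('a::euclidean_space \<Rightarrow> 'a \<Rightarrow> real) \<Rightarrow> real" where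
  "ctr h = (\<Sum>b\<in>Basis. h b b)"

definition cfrob :: "('a::euclidean_space \<Rightarrow> 'a \<Rightarrow> real) \<Rightarrow> ('a \<Rightarrow> 'a \<Rightarrow> real) \<Rightarrow> real" where
  "cfrob h k = (\<Sum>b\<in>Basis. \<Sum>c\<in>Basis. h b c * k b c)"

definition ctr12 :: "('a::euclidean_space \<Rightarrow> real) \<Rightarrow> ('a \<Rightarrow> 'a \<Rightarrow> 'a \<Rightarrow> real) \<Rightarrow> real" where
  "ctr12 p T = (\<Sum>c\<in>Basis. p c * (\<Sum>b\<in>Basis. T b b c))"

definition ctr23 :: "('a::euclidean_space \<Rightarrow> real) \<Rightarrow> ('a \<Rightarrow> 'a \<Rightarrow> 'a \<Rightarrow> real) \<Rightarrow> real" where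
  "ctr23 p T = (\<Sum>c\<in>Basis. p c * (\<Sum>b\<in>Basis. T c b b))"

lemmas contraction_defs = cdot_def chess_def ctr_def cfrob_def ctr12_def ctr23_def

lemma contraction_add:
  "cdot (p + p') q = cdot p q + cdot p' q"
  "cdot p (q + q') = cdot p q + cdot p q'"
  "chess (p + p') q h = chess p q h + chess p' q h"
  "chess p (q + q') h = chess p q h + chess p q' h"
  "chess p q (h + h') = chess p q h + chess p q h'"
  "ctr (h + h') = ctr h + ctr h'"
  "cfrob (h + h') k = cfrob h k + cfrob h' k"
  "cfrob h (k + k') = cfrob h k + cfrob h k'"
  "ctr12 (p + p') T = ctr12 p T + ctr12 p' T"
  "ctr12 p (T + T') = ctr12 p T + ctr12 p T'"
  "ctr23 (p + p') T = ctr23 p T + ctr23 p' T"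
  "ctr23 p (T + T') = ctr23 p T + ctr23 p T'"
  by (simp_all add: contraction_defs sum.distrib algebra_simps)

lemma contraction_scale:
  "cdot (\<lambda>i. c * p i) q = c * cdot p q"
  "cdot p (\<lambda>i. c * q i) = c * cdot p q"
  "chess (\<lambda>i. c * p i) q h = c * chess p q h"
  "chess p (\<lambda>i. c * q i) h = c * chess p q h"
  "chess p q (\<lambda>i j. c * h i j) = c * chess p q h"
  "ctr (\<lambda>i j. c * h i j) = c * ctr h"
  "cfrob (\<lambda>i j. c * h i j) k = c * cfrob h k"
  "cfrob h (\<lambda>i j. c * k i j) = c * cfrob h k"
  "ctr12 (\<lambda>i. c * p i) T = c * ctr12 p T"
  "ctr12 p (\<lambda>i j l. c * T i j l) = c * ctr12 p T"
  "ctr23 (\<lambda>i. c * p i) T = c * ctr23 p T"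
  "ctr23 p (\<lambda>i j l. c * T i j l) = c * ctr23 p T"
  by (simp_all add: contraction_defs sum_distrib_left algebra_simps)

lemma contraction_zero:
  "cdot (\<lambda>v. 0) q = 0" "cdot p (\<lambda>v. 0) = 0" "chess (\<lambda>v. 0) q h = 0" "chess p (\<lambda>v. 0) h = 0"
  "ctr12 (\<lambda>v. 0) T = 0" "ctr23 (\<lambda>v. 0) T = 0"
  by (simp_all add: contraction_defs)

(*
  A trilinear form whose diagonal is L_sigma2(u,u,u)(x) written in the 3-jet of the extension of u
  at x: the four lines come from the four terms of Lsig2_diag.
*)
fun Lsig2_form :: "real \<Rightarrow> 'a::euclidean_space jet \<Rightarrow> 'a jet \<Rightarrow> 'a jet \<Rightarrow> real" where
  "Lsig2_form n (v1, p1, h1, T1) (v2, p2, h2, T2) (v3, p3, h3, T3) =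
     1/2 * (2 * chess p1 p2 h3 + cdot p1 p2 * ctr h3)
   - (n - 4) / 16 * (v1 * ((2 * real DIM('a) - 8) * cdot p2 p3 + 2 * cfrob h2 h3 + 2 * ctr12 p2 T3)
       - (4 * chess p1 p2 h3 + 2 * cdot p1 p2 * ctr h3 + 2 * v1 * ctr23 p2 T3
          + (2 * cdot p1 p2 + 2 * v1 * ctr h2) * ctr h3))
   - (n - 1) / 4 * ((n - 4) / 4)\<^sup>2 * v1 * (2 * cdot p2 p3 + 2 * v2 * ctr h3)
   + n * (n - 1) / 8 * ((n - 4) / 4) ^ 3 * v1 * v2 * v3"

lemma Lsig2_form_add1: "Lsig2_form n (a + a') b c = Lsig2_form n a b c + Lsig2_form n a' b c"
  by (cases a; cases a'; cases b; cases c;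
      simp only: add_Pair Lsig2_form.simps contraction_add; simp add: ring_distribs)

lemma Lsig2_form_add2: "Lsig2_form n a (b + b') c = Lsig2_form n a b c + Lsig2_form n a b' c"
  by (cases a; cases b; cases b'; cases c;
      simp only: add_Pair Lsig2_form.simps contraction_add; simp add: ring_distribs)

lemma Lsig2_form_add3: "Lsig2_form n a b (c + c') = Lsig2_form n a b c + Lsig2_form n a b c'"
  by (cases a; cases b; cases c; cases c';
      simp only: add_Pair Lsig2_form.simps contraction_add; simp add: ring_distribs)

lemma Lsig2_form_scale1: "Lsig2_form n (jet_scale t a) b c = t * Lsig2_form n a b c"
  by (cases a; cases b; cases c;
      simp only: jet_scale_def prod.case Lsig2_form.simps contraction_scale; simp add: algebra_simps)

lemma Lsig2_form_scale2: "Lsig2_form n a (jet_scale t b) c = t * Lsig2_form n a b c"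
  by (cases a; cases b; cases c;
      simp only: jet_scale_def prod.case Lsig2_form.simps contraction_scale; simp add: algebra_simps)

lemma Lsig2_form_scale3: "Lsig2_form n a b (jet_scale t c) = t * Lsig2_form n a b c"
  by (cases a; cases b; cases c;
      simp only: jet_scale_def prod.case Lsig2_form.simps contraction_scale; simp add: algebra_simps)

lemma cubic_polarization:
  fixes M :: "'j::ab_semigroup_add \<Rightarrow> 'j \<Rightarrow> 'j \<Rightarrow> real"
  assumes "\<And>a a' b c. M (a + a') b c = M a b c + M a' b c"
    and "\<And>a b b' c. M a (b + b') c = M a b c + M a b' c"
    and "\<And>a b c c'. M a b (c + c') = M a b c + M a b c'"
  shows "M (a + b + c) (a + b + c) (a + b + c) - M (a + b) (a + b) (a + b)
      - M (a + c) (a + c) (a + c) - M (b + c) (b + c) (b + c) + M a a a + M b b b + M c c c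
    = M a b c + M a c b + M b a c + M b c a + M c a b + M c b a"
  by (simp add: assms)

definition Lsig2_polar :: "real \<Rightarrow> 'a::euclidean_space jet \<Rightarrow> 'a jet \<Rightarrow> real" where
  "Lsig2_polar n a b = Lsig2_form n a b b + Lsig2_form n b a b + Lsig2_form n b b a"

lemma Lsig2_polar_self: "Lsig2_polar n a a = 3 * Lsig2_form n a a a"
  by (simp add: Lsig2_polar_def)

lemma Lsig2_polar_add: "Lsig2_polar n (a + a') b = Lsig2_polar n a b + Lsig2_polar n a' b"
  by (simp add: Lsig2_polar_def Lsig2_form_add1 Lsig2_form_add2 Lsig2_form_add3)

lemma Lsig2_polar_zero: "Lsig2_polar n 0 b = 0"
  using Lsig2_polar_add[of n 0 0 b] by simp

lemma Lsig2_polar_scale: "Lsig2_polar n (jet_scale t a) b = t * Lsig2_polar n a b"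
  by (simp add: Lsig2_polar_def Lsig2_form_scale1 Lsig2_form_scale2 Lsig2_form_scale3 algebra_simps)

lemma Lsig2_polar_sum:
  "Lsig2_polar n (\<Sum>i\<in>I. jet_scale (c i) (a i)) b = (\<Sum>i\<in>I. c i * Lsig2_polar n (a i) b)"
  by (induction I rule: infinite_finite_induct)
    (simp_all add: Lsig2_polar_zero Lsig2_polar_add Lsig2_polar_scale)

section \<open>Operators of g_0 through 0-homogeneous extensions\<close>

lemma hext_eq_sgn: "hext f y = f (sgn y)"
  by (simp add: hext_def sgn_div_norm divide_inverse_commute)

lemma hext_unit: "norm x = 1 \<Longrightarrow> hext f x = f x"
  by (simp add: hext_def)

lemma hext_scaleR: "t > 0 \<Longrightarrow> hext f (t *\<^sub>R y) = hext f y"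
  by (simp add: hext_eq_sgn sgn_scaleR)

lemma hext_square:
  fixes f :: "'a::real_normed_vector \<Rightarrow> real"
  shows "hext (\<lambda>y. (f y)\<^sup>2) = (\<lambda>y. hext f y * hext f y)"
  unfolding hext_def power2_eq_square ..

lemma hext_inner_mult: "hext (\<lambda>y. (y \<bullet> e) * f y) = (\<lambda>y. (sgn y \<bullet> e) * hext f y)"
  by (simp add: hext_def fun_eq_iff sgn_div_norm divide_inverse_commute)

lemma D1_hext_scaleR:
  assumes "smooth_punctured (hext f)" "y \<noteq> 0" "t > 0"
  shows "D1 (hext f) (t *\<^sub>R y) w = D1 (hext f) y w / t"
proof -
  have ty: "t *\<^sub>R y \<noteq> 0" using assms by auto
  have "((\<lambda>z. hext f (t *\<^sub>R z)) has_derivative (\<lambda>h. D1 (hext f) (t *\<^sub>R y) (t *\<^sub>R h))) (at y)"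
    using has_derivative_compose[OF has_derivative_scaleR_right[OF has_derivative_ident]
        smooth_punctured_has_derivative[OF assms(1) ty]] by simp
  moreover have "((\<lambda>z. hext f (t *\<^sub>R z)) has_derivative D1 (hext f) y) (at y)"
    using smooth_punctured_has_derivative[OF assms(1,2)] by (simp add: hext_scaleR assms(3))
  ultimately have "D1 (hext f) (t *\<^sub>R y) (t *\<^sub>R w) = D1 (hext f) y w"
    by (metis has_derivative_unique)
  moreover have "D1 (hext f) (t *\<^sub>R y) (t *\<^sub>R w) = t * D1 (hext f) (t *\<^sub>R y) w"
    using linear_scale[OF linear_D1[OF assms(1) ty]] by simp
  ultimately show ?thesis using assms(3) by (simp add: field_simps)
qed

lemma D1_hext_radial:
  assumes "smooth_punctured (hext f)" "y \<noteq> 0"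
  shows "D1 (hext f) y y = 0"
proof -
  have "((\<lambda>s. hext f (s *\<^sub>R y)) has_derivative (\<lambda>h. D1 (hext f) y (h *\<^sub>R y))) (at 1)"
    using has_derivative_compose[OF has_derivative_scaleR_left[OF has_derivative_ident]
        smooth_punctured_has_derivative[OF assms(1), of "1 *\<^sub>R y"]] assms(2) by simp
  moreover have "((\<lambda>s. hext f (s *\<^sub>R y)) has_derivative (\<lambda>h. 0)) (at (1::real))"
    by (rule has_derivative_transform_within_open[OF has_derivative_const, where s="{0<..}"])
      (simp_all add: hext_scaleR)
  ultimately have "(\<lambda>h. D1 (hext f) y (h *\<^sub>R y)) = (\<lambda>h. 0)"
    by (rule has_derivative_unique)
  then show ?thesis by (metis scaleR_one)
qed

lemma D2_hext_radial:
  assumes "smooth_punctured (hext f)" "y \<noteq> 0"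
  shows "D2 (hext f) y y w = - D1 (hext f) y w"
proof -
  have "((\<lambda>s. D1 (hext f) (s *\<^sub>R y) w) has_derivative (\<lambda>h. D2 (hext f) y (h *\<^sub>R y) w)) (at 1)"
    using has_derivative_compose[OF has_derivative_scaleR_left[OF has_derivative_ident]
        has_derivative_D1[OF assms(1), of "1 *\<^sub>R y"]] assms(2) by simp
  moreover have "((\<lambda>s. D1 (hext f) (s *\<^sub>R y) w) has_derivative (\<lambda>h. - D1 (hext f) y w * h)) (at 1)"
  proof (rule has_derivative_transform_within_open[where s="{0<..}"])
    show "((\<lambda>s. D1 (hext f) y w / s) has_derivative (\<lambda>h. - D1 (hext f) y w * h)) (at 1)"
      by (rule has_derivative_eq_rhs, (rule derivative_intros)+) (simp_all add: fun_eq_iff)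
    show "D1 (hext f) y w / s = D1 (hext f) (s *\<^sub>R y) w" if "s \<in> {0<..}" for s
      using D1_hext_scaleR[OF assms, of s w] that by simp
  qed simp_all
  ultimately have "(\<lambda>h. D2 (hext f) y (h *\<^sub>R y) w) = (\<lambda>h. - D1 (hext f) y w * h)"
    by (rule has_derivative_unique)
  then show ?thesis by (metis scaleR_one mult_1_right)
qed

lemma sum_Basis_D1_hext_radial:
  assumes "smooth_punctured (hext f)" "y \<noteq> 0"
  shows "(\<Sum>b\<in>Basis. (b \<bullet> y) * D1 (hext f) y b) = 0"
  using linear_real_basis_expansion[OF linear_D1[OF assms], of y] D1_hext_radial[OF assms]
  by (simp add: inner_commute)

lemma sum_Basis_D2_hext_radial:
  assumes "smooth_punctured (hext f)" "y \<noteq> 0"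
  shows "(\<Sum>b\<in>Basis. (b \<bullet> y) * D2 (hext f) y b w) = - D1 (hext f) y w"
  using linear_real_basis_expansion[OF linear_D2[OF assms], of y] D2_hext_radial[OF assms]
  by (simp add: inner_commute)

definition dsgn :: "'a::real_inner \<Rightarrow> 'a \<Rightarrow> 'a" where
  "dsgn y h = inverse (norm y) *\<^sub>R h - ((h \<bullet> y) * inverse (norm y) ^ 3) *\<^sub>R y"

lemma has_derivative_sgn:
  assumes "(y::'a::real_inner) \<noteq> 0"
  shows "(sgn has_derivative dsgn y) (at y)"
proof -
  have "((\<lambda>z. inverse (norm z) *\<^sub>R z) has_derivative
      (\<lambda>h. inverse (norm y) *\<^sub>R h + (- (h \<bullet> y) * inverse (norm y) ^ 3) *\<^sub>R y)) (at y)"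
    using assms by (intro derivative_intros has_derivative_inverse_norm)
  moreover have "sgn = (\<lambda>z::'a. inverse (norm z) *\<^sub>R z)"
    by (simp add: fun_eq_iff sgn_div_norm)
  moreover have "dsgn y = (\<lambda>h. inverse (norm y) *\<^sub>R h + (- (h \<bullet> y) * inverse (norm y) ^ 3) *\<^sub>R y)"
    by (simp add: dsgn_def fun_eq_iff)
  ultimately show ?thesis by simp
qed

lemma dsgn_unit: "norm x = 1 \<Longrightarrow> dsgn x h = h - (h \<bullet> x) *\<^sub>R x"
  by (simp add: dsgn_def)

lemma D2_hext_dsgn:
  assumes "smooth_punctured (hext f)" "norm x = 1"
  shows "D2 (hext f) x (dsgn x b) c = D2 (hext f) x b c + (b \<bullet> x) * D1 (hext f) x c"
proof -
  have x: "x \<noteq> 0" using assms(2) by auto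
  have "D2 (hext f) x (dsgn x b) c = D2 (hext f) x b c - (b \<bullet> x) * D2 (hext f) x x c"
    using linear_diff[OF linear_D2[OF assms(1) x]] linear_scale[OF linear_D2[OF assms(1) x]]
    by (simp add: dsgn_unit[OF assms(2)])
  then show ?thesis using D2_hext_radial[OF assms(1) x] by simp
qed

definition egrad :: "('a::euclidean_space \<Rightarrow> real) \<Rightarrow> 'a \<Rightarrow> 'a" where
  "egrad F y = (\<Sum>c\<in>Basis. D1 F y c *\<^sub>R c)"

lemma sgrad_eq_egrad: "sgrad f = egrad (hext f)"
  by (simp add: sgrad_def egrad_def D1_def fun_eq_iff)

lemma has_derivative_egrad:
  "smooth_punctured F \<Longrightarrow> y \<noteq> 0 \<Longrightarrow>
    (egrad F has_derivative (\<lambda>v. \<Sum>c\<in>Basis. D2 F y v c *\<^sub>R c)) (at y)"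
  unfolding egrad_def[abs_def]
  by (intro has_derivative_sum has_derivative_scaleR_left has_derivative_D1)

lemma inner_sum_Basis_scaleR:
  fixes f :: "'a::euclidean_space \<Rightarrow> real"
  assumes "b \<in> Basis"
  shows "(\<Sum>c\<in>Basis. f c *\<^sub>R c) \<bullet> b = f b"
  using assms by (simp add: inner_sum_left inner_Basis if_distrib cong: if_cong)

lemma sum_Basis_delta:
  assumes "c \<in> Basis"
  shows "(\<Sum>b\<in>Basis. (b \<bullet> c) * g b) = g c"
proof -
  have "(\<Sum>b\<in>Basis. (b \<bullet> c) * g b) = (\<Sum>b\<in>Basis. if b = c then g b else 0)"
    by (rule sum.cong) (auto simp: inner_Basis assms)
  then show ?thesis by (simp add: assms)
qed

lemma sdiv_eq:
  assumes "y \<noteq> 0" "(V has_derivative V') (at (sgn y))"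
  shows "sdiv V y = (\<Sum>b\<in>Basis. V' (dsgn y b) \<bullet> b)"
proof -
  have "(hext V has_derivative (\<lambda>h. V' (dsgn y h))) (at y)"
    unfolding hext_eq_sgn[abs_def]
    using has_derivative_compose[OF has_derivative_sgn[OF assms(1)] assms(2)] .
  then show ?thesis by (simp add: sdiv_def frechet_derivative_at[symmetric])
qed

lemma sdiv_cong_sphere:
  assumes "y \<noteq> 0" "\<And>z. norm z = 1 \<Longrightarrow> V z = W z"
  shows "sdiv V y = sdiv W y"
proof -
  have "hext V z = hext W z" if "z \<noteq> 0" for z
    using that assms(2)[of "sgn z"] by (simp add: hext_eq_sgn norm_sgn)
  then show ?thesis
    unfolding sdiv_def by (subst frechet_derivative_punctured_cong[OF assms(1)]) auto
qed

lemma slap_unit: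
  assumes "smooth_punctured (hext f)" "norm x = 1"
  shows "slap f x = (\<Sum>b\<in>Basis. D2 (hext f) x b b)"
proof -
  have x: "x \<noteq> 0" using assms(2) by auto
  have "slap f x = (\<Sum>b\<in>Basis. (\<Sum>c\<in>Basis. D2 (hext f) x (dsgn x b) c *\<^sub>R c) \<bullet> b)"
    unfolding slap_def sgrad_eq_egrad
    using sdiv_eq[OF x] has_derivative_egrad[OF assms(1) x] assms(2) by (simp add: sgn_div_norm)
  also have "\<dots> = (\<Sum>b\<in>Basis. D2 (hext f) x b b + (b \<bullet> x) * D1 (hext f) x b)"
    by (intro sum.cong refl) (simp add: inner_sum_Basis_scaleR D2_hext_dsgn[OF assms])
  finally show ?thesis
    by (simp add: sum.distrib sum_Basis_D1_hext_radial[OF assms(1) x])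
qed

definition egrad_sq :: "('a::euclidean_space \<Rightarrow> real) \<Rightarrow> 'a \<Rightarrow> real" where
  "egrad_sq F y = (\<Sum>c\<in>Basis. D1 F y c * D1 F y c)"

lemma norm_egrad_power2: "(norm (egrad F y))\<^sup>2 = egrad_sq F y"
  by (simp add: power2_norm_eq_inner egrad_def egrad_sq_def inner_sum_left inner_sum_right
      inner_Basis if_distrib mult.commute cong: if_cong)

lemma smooth_punctured_egrad_sq: "smooth_punctured F \<Longrightarrow> smooth_punctured (egrad_sq F)"
  unfolding egrad_sq_def[abs_def]
  by (intro smooth_punctured_sum smooth_punctured_mult smooth_punctured_D1)

lemma D1_egrad_sq:
  "smooth_punctured F \<Longrightarrow> y \<noteq> 0 \<Longrightarrow> D1 (egrad_sq F) y w = 2 * (\<Sum>c\<in>Basis. D1 F y c * D2 F y w c)"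
  unfolding egrad_sq_def[abs_def]
  by (simp add: D1_sum D1_mult smooth_punctured_mult smooth_punctured_D1 D1_D1 sum_distrib_left
      algebra_simps)

lemma D2_egrad_sq:
  assumes "smooth_punctured F" "y \<noteq> 0"
  shows "D2 (egrad_sq F) y v w
    = (\<Sum>c\<in>Basis. 2 * (D3 F y v w c * D1 F y c) + 2 * (D2 F y w c * D2 F y v c))"
proof -
  have "D2 (egrad_sq F) y v w = (\<Sum>c\<in>Basis. D2 (\<lambda>z. D1 F z c * D1 F z c) y v w)"
    unfolding egrad_sq_def[abs_def]
    by (rule D2_sum) (simp_all add: smooth_punctured_mult smooth_punctured_D1 assms)
  then show ?thesis
    by (simp add: D2_mult[OF smooth_punctured_D1 smooth_punctured_D1] assms D1_D1 D2_D1
        algebra_simps)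
qed

lemma norm_egrad_hext_sgn:
  assumes "smooth_punctured (hext f)" "y \<noteq> 0"
  shows "(norm (egrad (hext f) (sgn y)))\<^sup>2 = (y \<bullet> y) * egrad_sq (hext f) y"
proof -
  have "D1 (hext f) (sgn y) c = norm y * D1 (hext f) y c" for c
    using D1_hext_scaleR[OF assms, of "inverse (norm y)" c] assms(2)
    by (simp add: sgn_div_norm field_simps)
  moreover have "y \<bullet> y = norm y * norm y"
    by (simp add: dot_square_norm power2_eq_square)
  ultimately show ?thesis
    by (simp add: norm_egrad_power2 egrad_sq_def sum_distrib_left algebra_simps)
qed

lemma sdiv_scaleR_egrad_unit:
  assumes \<phi>: "smooth_punctured \<phi>" and f: "smooth_punctured (hext f)" and unit: "norm x = 1"
  shows "sdiv (\<lambda>y. \<phi> y *\<^sub>R egrad (hext f) y) x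
    = (\<Sum>b\<in>Basis. D1 \<phi> x b * D1 (hext f) x b) + \<phi> x * ctr (D2 (hext f) x)"
proof -
  let ?p = "D1 (hext f) x" and ?h = "D2 (hext f) x"
  let ?g = "egrad (hext f)" and ?g' = "\<lambda>v. \<Sum>c\<in>Basis. ?h v c *\<^sub>R c"
  have x: "x \<noteq> 0" using unit by auto
  have "((\<lambda>y. \<phi> y *\<^sub>R ?g y) has_derivative (\<lambda>s. \<phi> x *\<^sub>R ?g' s + D1 \<phi> x s *\<^sub>R ?g x)) (at x)"
    by (rule has_derivative_scaleR[OF smooth_punctured_has_derivative[OF \<phi> x]
          has_derivative_egrad[OF f x]])
  then have "sdiv (\<lambda>y. \<phi> y *\<^sub>R ?g y) x
      = (\<Sum>b\<in>Basis. (\<phi> x *\<^sub>R ?g' (dsgn x b) + D1 \<phi> x (dsgn x b) *\<^sub>R ?g x) \<bullet> b)"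
    using unit by (intro sdiv_eq[OF x]) (simp add: sgn_div_norm)
  also have "\<dots> = (\<Sum>b\<in>Basis. D1 \<phi> x b * ?p b + \<phi> x * ?h b b
      + (\<phi> x - D1 \<phi> x x) * ((b \<bullet> x) * ?p b))"
  proof (intro sum.cong refl)
    fix b :: 'a assume b: "b \<in> Basis"
    have gb: "?g x \<bullet> b = ?p b"
      unfolding egrad_def by (rule inner_sum_Basis_scaleR[OF b])
    have g'b: "?g' (dsgn x b) \<bullet> b = ?h b b + (b \<bullet> x) * ?p b"
      using inner_sum_Basis_scaleR[OF b] by (simp add: D2_hext_dsgn[OF f unit])
    have \<phi>'b: "D1 \<phi> x (dsgn x b) = D1 \<phi> x b - (b \<bullet> x) * D1 \<phi> x x"
      using linear_diff[OF linear_D1[OF \<phi> x]] linear_scale[OF linear_D1[OF \<phi> x]]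
      by (simp add: dsgn_unit[OF unit])
    show "(\<phi> x *\<^sub>R ?g' (dsgn x b) + D1 \<phi> x (dsgn x b) *\<^sub>R ?g x) \<bullet> b
      = D1 \<phi> x b * ?p b + \<phi> x * ?h b b + (\<phi> x - D1 \<phi> x x) * ((b \<bullet> x) * ?p b)"
      unfolding inner_add_left inner_scaleR_left gb g'b \<phi>'b by (simp add: algebra_simps)
  qed
  also have "\<dots> = (\<Sum>b\<in>Basis. D1 \<phi> x b * ?p b) + \<phi> x * ctr ?h"
    by (simp add: sum.distrib ctr_def sum_distrib_left[symmetric]
        sum_Basis_D1_hext_radial[OF f x])
  finally show ?thesis .
qed

section \<open>Extensions of the coordinate functions\<close>

definition sgn_inner_hess :: "'a::real_inner \<Rightarrow> 'a \<Rightarrow> 'a \<Rightarrow> real" where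
  "sgn_inner_hess x v w = (v \<bullet> x) * (w \<bullet> x) - v \<bullet> w"

definition sgn_inner_d3 :: "'a::real_inner \<Rightarrow> 'a \<Rightarrow> 'a \<Rightarrow> 'a \<Rightarrow> real" where
  "sgn_inner_d3 x s v w = - 2 * ((w \<bullet> x) * sgn_inner_hess x s v + (v \<bullet> x) * sgn_inner_hess x s w
     + (s \<bullet> x) * sgn_inner_hess x v w)"

lemma sgn_inner_eq: "(\<lambda>y. sgn y \<bullet> e) = (\<lambda>y. (y \<bullet> e) * inverse (norm y))"
  by (simp add: fun_eq_iff sgn_div_norm divide_inverse_commute)

lemma smooth_punctured_sgn_inner: "smooth_punctured (\<lambda>y::'a::euclidean_space. sgn y \<bullet> e)"
  unfolding sgn_inner_eq
  by (rule smooth_punctured_mult[OF smooth_punctured_inner_left smooth_punctured_inverse_norm])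

lemma jet_sgn_inner_unit:
  assumes "norm x = 1"
  shows "jet (\<lambda>y. sgn y \<bullet> x) x = (1, \<lambda>v. 0, sgn_inner_hess x, sgn_inner_d3 x)"
proof -
  have x: "x \<noteq> 0" and xx: "x \<bullet> x = 1" using assms by (auto simp: dot_square_norm)
  note rules = D1_mult D2_mult D3_mult smooth_punctured_inner_left smooth_punctured_inverse_norm x
    D1_inverse_norm D2_inverse_norm D3_inverse_norm_unit[OF assms] assms xx
  show ?thesis
    unfolding sgn_inner_eq jet_def
    by (simp add: rules fun_eq_iff sgn_inner_hess_def sgn_inner_d3_def inner_commute algebra_simps)
qed

definition jet_sgn_inner_correction :: "('a::euclidean_space \<Rightarrow> real) \<Rightarrow> 'a \<Rightarrow> 'a jet" where
  "jet_sgn_inner_correction F x = (0, \<lambda>v. 0, \<lambda>v w. F x * sgn_inner_hess x v w,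
     \<lambda>s v w. F x * sgn_inner_d3 x s v w + sgn_inner_hess x v w * D1 F x s
       + sgn_inner_hess x s w * D1 F x v + sgn_inner_hess x s v * D1 F x w)"

lemma jet_sgn_inner_mult_unit:
  assumes "smooth_punctured F" "norm x = 1"
  shows "jet (\<lambda>y. (sgn y \<bullet> x) * F y) x = jet F x + jet_sgn_inner_correction F x"
proof -
  have x: "x \<noteq> 0" using assms(2) by auto
  have N: "sgn x \<bullet> x = 1" "D1 (\<lambda>y. sgn y \<bullet> x) x = (\<lambda>v. 0)"
    "D2 (\<lambda>y. sgn y \<bullet> x) x = sgn_inner_hess x" "D3 (\<lambda>y. sgn y \<bullet> x) x = sgn_inner_d3 x"
    using jet_sgn_inner_unit[OF assms(2)] by (simp_all add: jet_def)
  show ?thesis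
  proof -
    note rules = smooth_punctured_sgn_inner assms(1) x N
    have "D1 (\<lambda>y. (sgn y \<bullet> x) * F y) x v = D1 F x v" for v
      by (simp add: D1_mult rules)
    moreover have "D2 (\<lambda>y. (sgn y \<bullet> x) * F y) x v w = D2 F x v w + F x * sgn_inner_hess x v w"
      for v w by (simp add: D2_mult rules)
    moreover have "D3 (\<lambda>y. (sgn y \<bullet> x) * F y) x s v w = D3 F x s v w + F x * sgn_inner_d3 x s v w
        + sgn_inner_hess x v w * D1 F x s + sgn_inner_hess x s w * D1 F x v
        + sgn_inner_hess x s v * D1 F x w" for s v w
      by (simp add: D3_mult rules algebra_simps)
    ultimately show ?thesis
      by (simp add: jet_def jet_sgn_inner_correction_def fun_eq_iff N)
  qed
qed

section \<open>The identity at a point of the sphere\<close>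

context
  fixes f :: "'a::euclidean_space \<Rightarrow> real" and x :: 'a
  assumes smooth: "smooth_punctured (hext f)" and unit: "norm x = 1"
begin

private abbreviation "U \<equiv> hext f"
private abbreviation "p \<equiv> D1 U x"
private abbreviation "h \<equiv> D2 U x"
private abbreviation "T \<equiv> D3 U x"
private abbreviation "H \<equiv> sgn_inner_hess x"

private lemma nonzero: "x \<noteq> 0"
  using unit by auto

private lemma inner_self_unit: "x \<bullet> x = 1"
  using unit by (simp add: dot_square_norm)

private lemma sum_Basis_radial:
  "(\<Sum>b\<in>Basis. (b \<bullet> x) * (b \<bullet> v)) = x \<bullet> v"
  "(\<Sum>b\<in>Basis. (b \<bullet> x) * p b) = 0"
  "(\<Sum>b\<in>Basis. (b \<bullet> x) * h b c) = - p c"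
  using euclidean_inner[of x v] sum_Basis_D1_hext_radial[OF smooth nonzero]
    sum_Basis_D2_hext_radial[OF smooth nonzero, of c]
  by (simp_all add: inner_commute)

lemma slap_square_unit: "slap (\<lambda>y. (f y)\<^sup>2) x = 2 * cdot p p + 2 * U x * ctr h"
proof -
  have "slap (\<lambda>y. (f y)\<^sup>2) x = (\<Sum>b\<in>Basis. D2 (\<lambda>y. U y * U y) x b b)"
    using slap_unit[of "\<lambda>y. (f y)\<^sup>2", OF _ unit] smooth_punctured_mult[OF smooth smooth]
    by (simp add: hext_square)
  also have "\<dots> = (\<Sum>b\<in>Basis. 2 * U x * h b b + 2 * (p b * p b))"
    by (simp add: D2_mult[OF smooth smooth nonzero] algebra_simps)
  finally show ?thesis by (simp add: cdot_def ctr_def sum.distrib sum_distrib_left)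
qed

lemma sdiv_norm_sgrad_cube_unit:
  "sdiv (\<lambda>y. (norm (sgrad f y))\<^sup>2 *\<^sub>R sgrad f y) x = 2 * chess p p h + cdot p p * ctr h"
proof -
  have "sdiv (\<lambda>y. (norm (sgrad f y))\<^sup>2 *\<^sub>R sgrad f y) x = sdiv (\<lambda>y. egrad_sq U y *\<^sub>R egrad U y) x"
    by (simp add: sgrad_eq_egrad norm_egrad_power2)
  also have "\<dots> = (\<Sum>b\<in>Basis. D1 (egrad_sq U) x b * p b) + egrad_sq U x * ctr h"
    by (rule sdiv_scaleR_egrad_unit[OF smooth_punctured_egrad_sq[OF smooth] smooth unit])
  also have "\<dots> = 2 * chess p p h + cdot p p * ctr h"
    by (simp add: D1_egrad_sq[OF smooth nonzero] chess_def cdot_def egrad_sq_def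
        sum_distrib_left sum_distrib_right algebra_simps)
  finally show ?thesis .
qed

lemma sdiv_slap_square_sgrad_unit:
  "sdiv (\<lambda>y. slap (\<lambda>z. (f z)\<^sup>2) y *\<^sub>R sgrad f y) x
   = 4 * chess p p h + 2 * cdot p p * ctr h + 2 * U x * ctr23 p T
     + (2 * cdot p p + 2 * U x * ctr h) * ctr h"
proof -
  let ?Q = "\<lambda>y. U y * U y"
  let ?\<phi> = "\<lambda>y. \<Sum>b\<in>Basis. D2 ?Q y b b"
  have Q: "smooth_punctured ?Q" by (rule smooth_punctured_mult[OF smooth smooth])
  have \<phi>: "smooth_punctured ?\<phi>" by (intro smooth_punctured_sum smooth_punctured_D2 Q)
  \<comment> \<open>Off the sphere slap is not given by ?\<phi>, but sdiv only sees values on the sphere.\<close>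
  have "slap (\<lambda>z. (f z)\<^sup>2) z *\<^sub>R sgrad f z = ?\<phi> z *\<^sub>R egrad U z" if "norm z = 1" for z
    using slap_unit[of "\<lambda>y. (f y)\<^sup>2", OF _ that] Q by (simp add: hext_square sgrad_eq_egrad)
  then have "sdiv (\<lambda>y. slap (\<lambda>z. (f z)\<^sup>2) y *\<^sub>R sgrad f y) x = sdiv (\<lambda>y. ?\<phi> y *\<^sub>R egrad U y) x"
    by (rule sdiv_cong_sphere[OF nonzero])
  also have "\<dots> = (\<Sum>b\<in>Basis. D1 ?\<phi> x b * p b) + ?\<phi> x * ctr h"
    by (rule sdiv_scaleR_egrad_unit[OF \<phi> smooth unit])
  also have "(\<Sum>b\<in>Basis. D1 ?\<phi> x b * p b)
      = 2 * U x * ctr23 p T + 2 * cdot p p * ctr h + 4 * chess p p h"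
    by (simp add: D1_sum smooth_punctured_D2 Q nonzero D1_D2 D3_mult[OF smooth smooth nonzero]
        contraction_defs sum.distrib sum_distrib_left sum_distrib_right algebra_simps)
  also have "?\<phi> x = 2 * cdot p p + 2 * U x * ctr h"
    using slap_square_unit slap_unit[of "\<lambda>y. (f y)\<^sup>2", OF _ unit] Q by (simp add: hext_square)
  finally show ?thesis by (simp add: algebra_simps)
qed

lemma slap_norm_sgrad_square_unit:
  "slap (\<lambda>y. (norm (sgrad f y))\<^sup>2) x
   = (2 * real DIM('a) - 8) * cdot p p + 2 * cfrob h h + 2 * ctr12 p T"
proof -
  let ?N = "\<lambda>y. (y \<bullet> y) * egrad_sq U y"
  have N: "smooth_punctured ?N"
    by (intro smooth_punctured_mult smooth_punctured_inner_self smooth_punctured_egrad_sq smooth)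
  have hext_N: "hext (\<lambda>y. (norm (sgrad f y))\<^sup>2) y = ?N y" if "y \<noteq> 0" for y
    using norm_egrad_hext_sgn[OF smooth that] by (simp add: hext_eq_sgn sgrad_eq_egrad)
  have "slap (\<lambda>y. (norm (sgrad f y))\<^sup>2) x = (\<Sum>b\<in>Basis. D2 ?N x b b)"
    using slap_unit[OF smooth_punctured_cong[OF N] unit] hext_N D2_cong[OF nonzero hext_N]
    by simp
  also have "\<dots> = (\<Sum>b\<in>Basis. 2 * cdot p p + 8 * ((b \<bullet> x) * (\<Sum>c\<in>Basis. p c * h b c))
      + (\<Sum>c\<in>Basis. 2 * (T b b c * p c) + 2 * (h b c * h b c)))"
  proof (intro sum.cong refl)
    fix b :: 'a assume "b \<in> Basis"
    moreover have "egrad_sq U x = cdot p p" by (simp add: egrad_sq_def cdot_def)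
    ultimately show "D2 ?N x b b = 2 * cdot p p + 8 * ((b \<bullet> x) * (\<Sum>c\<in>Basis. p c * h b c))
      + (\<Sum>c\<in>Basis. 2 * (T b b c * p c) + 2 * (h b c * h b c))"
      by (simp add: D2_mult[OF smooth_punctured_inner_self smooth_punctured_egrad_sq[OF smooth]
          nonzero] D1_egrad_sq[OF smooth nonzero] D2_egrad_sq[OF smooth nonzero] inner_self_unit
          inner_commute algebra_simps)
  qed
  also have "\<dots> = 2 * real DIM('a) * cdot p p + 8 * (\<Sum>b\<in>Basis. (b \<bullet> x) * (\<Sum>c\<in>Basis. p c * h b c))
      + 2 * ctr12 p T + 2 * cfrob h h"
  proof -
    have "(\<Sum>b\<in>Basis. \<Sum>c\<in>Basis. 2 * (T b b c * p c)) = 2 * ctr12 p T"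
      unfolding ctr12_def sum_distrib_left by (subst sum.swap) (simp add: algebra_simps)
    then show ?thesis
      by (simp add: sum.distrib cfrob_def sum_distrib_left algebra_simps)
  qed
  also have "(\<Sum>b\<in>Basis. (b \<bullet> x) * (\<Sum>c\<in>Basis. p c * h b c)) = - cdot p p"
  proof -
    have "(\<Sum>b\<in>Basis. (b \<bullet> x) * (\<Sum>c\<in>Basis. p c * h b c))
        = (\<Sum>c\<in>Basis. p c * (\<Sum>b\<in>Basis. (b \<bullet> x) * h b c))"
      unfolding sum_distrib_left by (subst sum.swap) (simp add: algebra_simps)
    then show ?thesis
      by (simp add: sum_Basis_radial cdot_def sum_negf)
  qed
  finally show ?thesis by (simp add: algebra_simps)
qed

lemma Lsig2_diag_eq_form: "Lsig2_diag n f x = Lsig2_form n (jet U x) (jet U x) (jet U x)"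
  unfolding Lsig2_diag_def sdiv_norm_sgrad_cube_unit slap_norm_sgrad_square_unit
    sdiv_slap_square_sgrad_unit slap_square_unit
  by (simp add: jet_def hext_unit[OF unit] power3_eq_cube)

private lemma sum_Basis_hess_trace: "(\<Sum>b\<in>Basis. H b b) = 1 - real DIM('a)"
proof -
  have "(\<Sum>b\<in>Basis. H b b) = (\<Sum>b\<in>Basis. (b \<bullet> x) * (b \<bullet> x)) - (\<Sum>b\<in>(Basis::'a set). 1)"
    by (simp add: sgn_inner_hess_def sum_subtractf)
  then show ?thesis by (simp add: sum_Basis_radial(1) inner_self_unit)
qed

private lemma sum_Basis_hess_radial:
  "(\<Sum>b\<in>Basis. (b \<bullet> x) * H b v) = 0" "(\<Sum>b\<in>Basis. (b \<bullet> x) * H v b) = 0"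
proof -
  have "(\<Sum>b\<in>Basis. (b \<bullet> x) * H b v) = (v \<bullet> x) * (\<Sum>b\<in>Basis. (b \<bullet> x) * (b \<bullet> x))
      - (\<Sum>b\<in>Basis. (b \<bullet> x) * (b \<bullet> v))"
    by (simp add: sgn_inner_hess_def sum_subtractf sum_distrib_left algebra_simps)
  then show "(\<Sum>b\<in>Basis. (b \<bullet> x) * H b v) = 0"
    by (simp add: sum_Basis_radial(1) inner_self_unit inner_commute)
  then show "(\<Sum>b\<in>Basis. (b \<bullet> x) * H v b) = 0"
    by (simp add: sgn_inner_hess_def mult.commute inner_commute)
qed

private lemma sum_Basis_hess_grad:
  assumes "c \<in> Basis"
  shows "(\<Sum>b\<in>Basis. H b c * p b) = - p c" "(\<Sum>b\<in>Basis. H c b * p b) = - p c"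
proof -
  have "(\<Sum>b\<in>Basis. H b c * p b) = (c \<bullet> x) * (\<Sum>b\<in>Basis. (b \<bullet> x) * p b)
      - (\<Sum>b\<in>Basis. (b \<bullet> c) * p b)"
    by (simp add: sgn_inner_hess_def sum_subtractf sum_distrib_left algebra_simps)
  then show "(\<Sum>b\<in>Basis. H b c * p b) = - p c"
    by (simp add: sum_Basis_radial(2) sum_Basis_delta[OF assms])
  then show "(\<Sum>b\<in>Basis. H c b * p b) = - p c"
    by (simp add: sgn_inner_hess_def mult.commute inner_commute[of c])
qed

private lemma sum_Basis_d3:
  "(\<Sum>b\<in>Basis. sgn_inner_d3 x b b c) = - 2 * (1 - real DIM('a)) * (c \<bullet> x)"
  "(\<Sum>b\<in>Basis. sgn_inner_d3 x c b b) = - 2 * (1 - real DIM('a)) * (c \<bullet> x)"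
proof -
  have "(\<Sum>b\<in>Basis. sgn_inner_d3 x b b c)
      = - 2 * ((c \<bullet> x) * (\<Sum>b\<in>Basis. H b b) + 2 * (\<Sum>b\<in>Basis. (b \<bullet> x) * H b c))"
    and "(\<Sum>b\<in>Basis. sgn_inner_d3 x c b b)
      = - 2 * ((c \<bullet> x) * (\<Sum>b\<in>Basis. H b b) + 2 * (\<Sum>b\<in>Basis. (b \<bullet> x) * H c b))"
    by (simp_all add: sgn_inner_d3_def sum.distrib sum_subtractf sum_negf sum_distrib_left
        algebra_simps)
  then show "(\<Sum>b\<in>Basis. sgn_inner_d3 x b b c) = - 2 * (1 - real DIM('a)) * (c \<bullet> x)"
    and "(\<Sum>b\<in>Basis. sgn_inner_d3 x c b b) = - 2 * (1 - real DIM('a)) * (c \<bullet> x)"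
    by (simp_all add: sum_Basis_hess_trace sum_Basis_hess_radial algebra_simps)
qed

private abbreviation "K \<equiv> \<lambda>s v w.
  U x * sgn_inner_d3 x s v w + H v w * p s + H s w * p v + H s v * p w"

private lemma chess_hess: "chess p p (\<lambda>v w. U x * H v w) = - U x * cdot p p"
proof -
  have "chess p p (\<lambda>v w. U x * H v w) = U x * (\<Sum>b\<in>Basis. p b * (\<Sum>c\<in>Basis. H b c * p c))"
    by (simp add: chess_def sum_distrib_left algebra_simps)
  also have "\<dots> = U x * (\<Sum>b\<in>Basis. p b * - p b)"
    by (simp add: sum_Basis_hess_grad)
  finally show ?thesis by (simp add: cdot_def sum_negf)
qed

private lemma ctr_hess: "ctr (\<lambda>v w. U x * H v w) = U x * (1 - real DIM('a))"
  by (simp add: ctr_def sum_distrib_left[symmetric] sum_Basis_hess_trace)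

private lemma cfrob_hess:
  "cfrob (\<lambda>v w. U x * H v w) h = - U x * ctr h"
  "cfrob h (\<lambda>v w. U x * H v w) = - U x * ctr h"
proof -
  have "(\<Sum>b\<in>Basis. \<Sum>c\<in>Basis. H b c * h b c)
      = (\<Sum>b\<in>Basis. \<Sum>c\<in>Basis. (b \<bullet> x) * (c \<bullet> x) * h b c - (b \<bullet> c) * h b c)"
    by (simp add: sgn_inner_hess_def left_diff_distrib)
  also have "\<dots> = (\<Sum>c\<in>Basis. \<Sum>b\<in>Basis. (b \<bullet> x) * (c \<bullet> x) * h b c - (b \<bullet> c) * h b c)"
    by (rule sum.swap)
  also have "\<dots> = (\<Sum>c\<in>Basis. (c \<bullet> x) * (\<Sum>b\<in>Basis. (b \<bullet> x) * h b c) - h c c)"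
    by (intro sum.cong refl)
      (simp add: sum_subtractf sum_distrib_left sum_Basis_delta algebra_simps)
  also have "\<dots> = - ctr h"
    by (simp add: sum_Basis_radial sum_subtractf sum_negf ctr_def)
  finally have "(\<Sum>b\<in>Basis. \<Sum>c\<in>Basis. H b c * h b c) = - ctr h" .
  then show "cfrob (\<lambda>v w. U x * H v w) h = - U x * ctr h"
    and "cfrob h (\<lambda>v w. U x * H v w) = - U x * ctr h"
    by (simp_all add: cfrob_def sum_distrib_left[symmetric] mult.assoc mult.commute[of "h _ _"])
qed

private lemma sum_Basis_K:
  assumes c: "c \<in> Basis"
  shows "(\<Sum>b\<in>Basis. K b b c)
      = - 2 * U x * (1 - real DIM('a)) * (c \<bullet> x) - (1 + real DIM('a)) * p c"
    and "(\<Sum>b\<in>Basis. K c b b)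
      = - 2 * U x * (1 - real DIM('a)) * (c \<bullet> x) - (1 + real DIM('a)) * p c"
proof -
  let ?k = "- 2 * U x * (1 - real DIM('a)) * (c \<bullet> x) - (1 + real DIM('a)) * p c"
  have "(\<Sum>b\<in>Basis. K b b c) = U x * (\<Sum>b\<in>Basis. sgn_inner_d3 x b b c)
      + 2 * (\<Sum>b\<in>Basis. H b c * p b) + (\<Sum>b\<in>Basis. H b b) * p c"
    and "(\<Sum>b\<in>Basis. K c b b) = U x * (\<Sum>b\<in>Basis. sgn_inner_d3 x c b b)
      + 2 * (\<Sum>b\<in>Basis. H c b * p b) + (\<Sum>b\<in>Basis. H b b) * p c"
    by (simp_all add: sum.distrib sum_distrib_left sum_distrib_right algebra_simps)
  then show "(\<Sum>b\<in>Basis. K b b c) = ?k" and "(\<Sum>b\<in>Basis. K c b b) = ?k"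
    by (simp_all add: sum_Basis_d3 sum_Basis_hess_grad[OF c] sum_Basis_hess_trace algebra_simps)
qed

private lemma ctr_K:
  "ctr12 p K = - (real DIM('a) + 1) * cdot p p" "ctr23 p K = - (real DIM('a) + 1) * cdot p p"
proof -
  let ?r = "- (real DIM('a) + 1) * cdot p p"
  let ?k = "\<lambda>c. - 2 * U x * (1 - real DIM('a)) * (c \<bullet> x) - (1 + real DIM('a)) * p c"
  have "ctr12 p K = (\<Sum>c\<in>Basis. p c * ?k c)" "ctr23 p K = (\<Sum>c\<in>Basis. p c * ?k c)"
    unfolding ctr12_def ctr23_def by (rule sum.cong[OF refl], simp only: sum_Basis_K)+
  moreover have "(\<Sum>c\<in>Basis. p c * ?k c) = - 2 * U x * (1 - real DIM('a))
      * (\<Sum>c\<in>Basis. (c \<bullet> x) * p c) - (1 + real DIM('a)) * cdot p p"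
    by (simp add: cdot_def sum_subtractf sum.distrib sum_distrib_left algebra_simps)
  ultimately show "ctr12 p K = ?r" "ctr23 p K = ?r"
    by (simp_all add: sum_Basis_radial algebra_simps)
qed

lemma Lsig2_polar_sgn_inner_correction:
  assumes "real DIM('a) = n + 1"
  shows "Lsig2_polar n (jet_sgn_inner_correction U x) (jet U x) = (n - 1) * f x * sigma1 n f x"
proof -
  have "(norm (sgrad f x))\<^sup>2 = cdot p p"
    by (simp add: sgrad_eq_egrad norm_egrad_power2 egrad_sq_def cdot_def)
  then show ?thesis
    unfolding Lsig2_polar_def jet_def jet_sgn_inner_correction_def Lsig2_form.simps
      contraction_zero chess_hess ctr_hess cfrob_hess ctr_K sigma1_def slap_square_unit
    by (simp add: hext_unit[OF unit] assms field_simps power2_eq_square power3_eq_cube)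
qed

end

lemma Lsig2_eq_polar:
  assumes f: "smooth_punctured (hext f)" and g: "smooth_punctured (hext g)" and unit: "norm x = 1"
  shows "Lsig2 n f g g x = Lsig2_polar n (jet (hext f) x) (jet (hext g) x) / 3"
proof -
  let ?a = "jet (hext f) x" and ?b = "jet (hext g) x"
  let ?L = "\<lambda>u. Lsig2_diag n u x" and ?C = "\<lambda>a. Lsig2_form n a a a"
  have x: "x \<noteq> 0" using unit by auto
  have fg: "hext (\<lambda>y. f y + g y) = (\<lambda>y. hext f y + hext g y)"
    and fgg: "hext (\<lambda>y. f y + g y + g y) = (\<lambda>y. hext f y + hext g y + hext g y)"
    and gg: "hext (\<lambda>y. g y + g y) = (\<lambda>y. hext g y + hext g y)"
    by (simp_all add: hext_def fun_eq_iff)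
  have fg_smooth: "smooth_punctured (\<lambda>y. hext f y + hext g y)"
    by (rule smooth_punctured_add[OF f g])
  have jet_fg: "jet (\<lambda>y. hext f y + hext g y) x = ?a + ?b"
    by (rule jet_add[OF f g x])
  have "?L (\<lambda>y. f y + g y) = ?C (?a + ?b)"
    using Lsig2_diag_eq_form[of "\<lambda>y. f y + g y" x n, unfolded fg, OF fg_smooth unit]
    by (simp only: jet_fg)
  moreover have "?L (\<lambda>y. f y + g y + g y) = ?C (?a + ?b + ?b)"
    using Lsig2_diag_eq_form[of "\<lambda>y. f y + g y + g y" x n, unfolded fgg,
        OF smooth_punctured_add[OF fg_smooth g] unit]
    by (simp only: jet_add[OF fg_smooth g x] jet_fg)
  moreover have "?L (\<lambda>y. g y + g y) = ?C (?b + ?b)"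
    using Lsig2_diag_eq_form[of "\<lambda>y. g y + g y" x n, unfolded gg,
        OF smooth_punctured_add[OF g g] unit]
    by (simp only: jet_add[OF g g x])
  moreover have "?L f = ?C ?a" "?L g = ?C ?b"
    using Lsig2_diag_eq_form f g unit by blast+
  moreover have "?C (?a + ?b + ?b) - ?C (?a + ?b) - ?C (?a + ?b) - ?C (?b + ?b)
      + ?C ?a + ?C ?b + ?C ?b = 2 * Lsig2_polar n ?a ?b"
    using cubic_polarization[where M = "Lsig2_form n" and a = ?a and b = ?b and c = ?b,
        OF Lsig2_form_add1 Lsig2_form_add2 Lsig2_form_add3]
    unfolding Lsig2_polar_def by argo
  ultimately show ?thesis
    unfolding Lsig2_def by argo
qed

lemma Lsig2_sum_left:
  assumes f: "\<And>i. i \<in> I \<Longrightarrow> smooth_punctured (hext (f i))" and g: "smooth_punctured (hext g)"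
    and unit: "norm x = 1"
  shows "Lsig2 n (\<lambda>y. \<Sum>i\<in>I. c i * f i y) g g x = (\<Sum>i\<in>I. c i * Lsig2 n (f i) g g x)"
proof -
  have x: "x \<noteq> 0" using unit by auto
  have hext_sum: "hext (\<lambda>y. \<Sum>i\<in>I. c i * f i y) = (\<lambda>y. \<Sum>i\<in>I. c i * hext (f i) y)"
    by (simp add: hext_def fun_eq_iff)
  have "Lsig2 n (\<lambda>y. \<Sum>i\<in>I. c i * f i y) g g x
      = Lsig2_polar n (jet (\<lambda>y. \<Sum>i\<in>I. c i * hext (f i) y) x) (jet (hext g) x) / 3"
    using Lsig2_eq_polar[OF _ g unit, of "\<lambda>y. \<Sum>i\<in>I. c i * f i y"] f
    by (simp add: hext_sum smooth_punctured_sum smooth_punctured_cmult)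
  also have "jet (\<lambda>y. \<Sum>i\<in>I. c i * hext (f i) y) x = (\<Sum>i\<in>I. jet_scale (c i) (jet (hext (f i)) x))"
    using f by (simp add: jet_sum smooth_punctured_cmult jet_cmult x)
  also have "Lsig2_polar n (\<Sum>i\<in>I. jet_scale (c i) (jet (hext (f i)) x)) (jet (hext g) x) / 3
      = (\<Sum>i\<in>I. c i * (Lsig2_polar n (jet (hext (f i)) x) (jet (hext g) x) / 3))"
    by (simp add: Lsig2_polar_sum sum_divide_distrib)
  also have "\<dots> = (\<Sum>i\<in>I. c i * Lsig2 n (f i) g g x)"
    by (rule sum.cong[OF refl]) (simp add: Lsig2_eq_polar[OF f g unit])
  finally show ?thesis .
qed

lemma Lsig2_inner_mult_left_unit:
  fixes u :: "'a::euclidean_space \<Rightarrow> real"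
  assumes smooth: "smooth_punctured (hext u)" and unit: "norm x = 1" and dim: "real DIM('a) = n + 1"
  shows "Lsig2 n (\<lambda>y. (y \<bullet> x) * u y) u u x = Lsig2_diag n u x + (n - 1) / 3 * u x * sigma1 n u x"
proof -
  let ?J = "jet (hext u) x"
  have "Lsig2 n (\<lambda>y. (y \<bullet> x) * u y) u u x
      = Lsig2_polar n (jet (\<lambda>y. (sgn y \<bullet> x) * hext u y) x) ?J / 3"
    using Lsig2_eq_polar[OF _ smooth unit, of "\<lambda>y. (y \<bullet> x) * u y"]
      smooth_punctured_mult[OF smooth_punctured_sgn_inner smooth]
    by (simp add: hext_inner_mult)
  also have "\<dots> = (Lsig2_polar n ?J ?J + Lsig2_polar n (jet_sgn_inner_correction (hext u) x) ?J) / 3"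
    by (simp add: jet_sgn_inner_mult_unit[OF smooth unit] Lsig2_polar_add)
  also have "\<dots> = Lsig2_diag n u x + (n - 1) / 3 * u x * sigma1 n u x"
    by (simp add: Lsig2_polar_self Lsig2_diag_eq_form[OF smooth unit]
        Lsig2_polar_sgn_inner_correction[OF smooth unit dim])
  finally show ?thesis .
qed

theorem theorem1p4:
  fixes u :: "'a::euclidean_space \<Rightarrow> real" and x :: 'a
  assumes "DIM('a) \<ge> 4"
    and "smooth_sphere_fun u"
    and "norm x = 1"
  shows "(\<Sum>b\<in>Basis. (x \<bullet> b) *
            (Lsig2 (real (DIM('a) - 1)) (\<lambda>y. (y \<bullet> b) * u y) u u x
             - (x \<bullet> b) * Lsig2_diag (real (DIM('a) - 1)) u x))
         = (real (DIM('a) - 1) - 1) / 3 * u x * sigma1 (real (DIM('a) - 1)) u x"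
proof -
  define n where "n = real (DIM('a) - 1)"
  have dim: "real DIM('a) = n + 1"
    by (simp add: n_def of_nat_diff DIM_positive[THEN Suc_leI])
  have smooth: "smooth_punctured (hext u)"
    using assms(2) by (simp add: smooth_sphere_fun_def)
  have smooth_coord: "smooth_punctured (hext (\<lambda>y. (y \<bullet> b) * u y))" for b
    unfolding hext_inner_mult by (rule smooth_punctured_mult[OF smooth_punctured_sgn_inner smooth])
  have "(\<Sum>b\<in>Basis. (x \<bullet> b) * (Lsig2 n (\<lambda>y. (y \<bullet> b) * u y) u u x - (x \<bullet> b) * Lsig2_diag n u x))
      = Lsig2 n (\<lambda>y. \<Sum>b\<in>Basis. (x \<bullet> b) * ((y \<bullet> b) * u y)) u u x
        - (\<Sum>b\<in>Basis. (x \<bullet> b) * (x \<bullet> b)) * Lsig2_diag n u x"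
    by (simp add: Lsig2_sum_left[OF smooth_coord smooth assms(3)] right_diff_distrib sum_subtractf
        sum_distrib_right mult.assoc)
  also have "(\<lambda>y. \<Sum>b\<in>Basis. (x \<bullet> b) * ((y \<bullet> b) * u y)) = (\<lambda>y. (y \<bullet> x) * u y)"
    by (simp add: fun_eq_iff euclidean_inner[of _ x] sum_distrib_left algebra_simps)
  also have "(\<Sum>b\<in>Basis. (x \<bullet> b) * (x \<bullet> b)) = 1"
    using assms(3) by (simp add: euclidean_inner[symmetric] dot_square_norm)
  finally show ?thesis
    using Lsig2_inner_mult_left_unit[OF smooth assms(3) dim] by (simp add: n_def)
qed

end
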